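(* Let $S$ be a minimal $A_\infty$ algebra over $\mathbb F_2$ supported in non-negative degrees. Let $P=(\bigoplus_{i=0}^{D}V_i[i]\otimes S,\ \delta_{i,j})$ be a twisted complex of free right $S$-modules, where each $V_i$ is an $\mathbb F_2$-vector space and the components $\delta_{i,j}$ (from the $i$-th to the $j$-th term) vanish whenever $j\le i$. If the cohomology of the endomorphism complex of $P$ is supported in non-negative degrees, then $P$ is isomorphic, up to shift, to $V\otimes S$ for some vector space $V$ (i.e. only one $V_i$ is non-zero).
   Context: An $A_\infty$ algebra is minimal if $\mu^1=0$. Since the $i$-th term $V_i[i]\otimes S$ is shifted by $i$, each component $\delta_{i,j}$ is a degree-one morphism and corresponds to an element of $\operatorname{Hom}(V_i,V_j\otimes S^{\,1+j-i})$; the twisted complex condition is $\sum \mu^d(\delta,\dots,\delta)=0$. The endomorphism complex of $P$ is $\bigoplus_{i,j}\operatorname{Hom}(V_i,V_j\otimes S^{k+j-i})$ in degree $k$, with differential $x\mapsto\sum_d\mu^d(\delta,\dots,\delta,x,\delta,\dots,\delta)$. *)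

theory Defs
  imports Main
begin

text \<open>
  An F2-vector space is an abelian group in which x + x = 0
  (scalars 0,1 act trivially).  A graded F2-vector space S is a family of
  subgroups Sd k (k :: int) of an ambient abelian group 's whose sum is direct.
  An A-infinity operation is modelled by mu :: 's list => 's, where
  mu [a1,...,ad] = mu^d(a1,...,ad); over F2 no signs occur.
\<close>

definition graded_F2 :: "(int \<Rightarrow> 's::ab_group_add set) \<Rightarrow> bool" where
  "graded_F2 Sd \<longleftrightarrow>
     (\<forall>x::'s. x + x = 0) \<and>
     (\<forall>k. 0 \<in> Sd k \<and> (\<forall>x\<in>Sd k. \<forall>y\<in>Sd k. x + y \<in> Sd k)) \<and>
     (\<forall>K f. finite K \<longrightarrow> (\<forall>k\<in>K. f k \<in> Sd k) \<longrightarrow> sum f K = 0 \<longrightarrow> (\<forall>k\<in>K. f k = 0))"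

definition homog_list :: "(int \<Rightarrow> 's set) \<Rightarrow> 's list \<Rightarrow> (nat \<Rightarrow> int) \<Rightarrow> bool" where
  "homog_list Sd xs ks \<longleftrightarrow> (\<forall>i<length xs. xs ! i \<in> Sd (ks i))"

definition ainf_F2 :: "(int \<Rightarrow> 's::ab_group_add set) \<Rightarrow> ('s list \<Rightarrow> 's) \<Rightarrow> bool" where
  "ainf_F2 Sd mu \<longleftrightarrow>
     graded_F2 Sd \<and>
     (\<forall>xs i a b. i < length xs \<longrightarrow>
        mu (xs[i := a + b]) = mu (xs[i := a]) + mu (xs[i := b])) \<and>
     (\<forall>xs ks. xs \<noteq> [] \<longrightarrow> homog_list Sd xs ks \<longrightarrow>
        mu xs \<in> Sd ((\<Sum>i<length xs. ks i) + 2 - int (length xs))) \<and>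
     (\<forall>xs ks. xs \<noteq> [] \<longrightarrow> homog_list Sd xs ks \<longrightarrow>
        (\<Sum>(r, s)\<in>{(r, s). 1 \<le> s \<and> r + s \<le> length xs}.
           mu (take r xs @ [mu (take s (drop r xs))] @ drop (r + s) xs)) = 0)"

definition minimal_ainf :: "(int \<Rightarrow> 's::ab_group_add set) \<Rightarrow> ('s list \<Rightarrow> 's) \<Rightarrow> bool" where
  "minimal_ainf Sd mu \<longleftrightarrow> ainf_F2 Sd mu \<and> (\<forall>k. \<forall>x\<in>Sd k. mu [x] = 0)"

text \<open>Cohomological unit (for a minimal algebra: a two-sided unit for mu^2 in degree 0).\<close>
definition c_unit :: "(int \<Rightarrow> 's::ab_group_add set) \<Rightarrow> ('s list \<Rightarrow> 's) \<Rightarrow> 's \<Rightarrow> bool" where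
  "c_unit Sd mu u \<longleftrightarrow> u \<in> Sd 0 \<and> (\<forall>k. \<forall>x\<in>Sd k. mu [u, x] = x \<and> mu [x, u] = x)"

text \<open>
  The basis of V_0 (+) ... (+) V_D is a set E,
  lvl e = i means that the basis vector e lies in V_i.  A matrix X :: 'b => 'b => 's
  represents the map sending the basis vector e to sum_f f (x) X e f, so it must be
  column-finite.  mu is extended to matrices by summing over paths.
\<close>
definition mpaths :: "('b \<Rightarrow> 'b \<Rightarrow> 's::zero) list \<Rightarrow> 'b \<Rightarrow> 'b \<Rightarrow> 'b list set" where
  "mpaths Xs e f = {ps. length ps = Suc (length Xs) \<and> ps ! 0 = e \<and> ps ! length Xs = f \<and>
                        (\<forall>i<length Xs. (Xs ! i) (ps ! i) (ps ! Suc i) \<noteq> 0)}"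

definition muM :: "('s::ab_group_add list \<Rightarrow> 's) \<Rightarrow> ('b \<Rightarrow> 'b \<Rightarrow> 's) list \<Rightarrow> 'b \<Rightarrow> 'b \<Rightarrow> 's" where
  "muM mu Xs e f = (\<Sum>ps\<in>mpaths Xs e f. mu (map (\<lambda>i. (Xs ! i) (ps ! i) (ps ! Suc i)) [0..<length Xs]))"

text \<open>Homogeneous elements of degree k of the endomorphism complex
  bigoplus_{i,j} Hom(V_i, V_j (x) S^{k+j-i}).\<close>
definition endo_elt :: "(int \<Rightarrow> 's::ab_group_add set) \<Rightarrow> 'b set \<Rightarrow> ('b \<Rightarrow> nat) \<Rightarrow> int \<Rightarrow> ('b \<Rightarrow> 'b \<Rightarrow> 's) \<Rightarrow> bool" where
  "endo_elt Sd E lvl k x \<longleftrightarrow>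
     (\<forall>e f. x e f \<noteq> 0 \<longrightarrow> e \<in> E \<and> f \<in> E) \<and>
     (\<forall>e f. x e f \<in> Sd (k + int (lvl f) - int (lvl e))) \<and>
     (\<forall>e. finite {f. x e f \<noteq> 0})"

text \<open>Twisted complex (bigoplus_{i=0}^D V_i[i] (x) S, delta) with delta_{i,j} = 0 for j \<le> i.
  Terms with more than D factors delta vanish, so the sum is finite.\<close>
definition twisted_complex ::
  "(int \<Rightarrow> 's::ab_group_add set) \<Rightarrow> ('s list \<Rightarrow> 's) \<Rightarrow> nat \<Rightarrow> 'b set \<Rightarrow> ('b \<Rightarrow> nat) \<Rightarrow> ('b \<Rightarrow> 'b \<Rightarrow> 's) \<Rightarrow> bool" where
  "twisted_complex Sd mu D E lvl \<delta> \<longleftrightarrow>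
     (\<forall>e\<in>E. lvl e \<le> D) \<and>
     endo_elt Sd E lvl 1 \<delta> \<and>
     (\<forall>e f. \<delta> e f \<noteq> 0 \<longrightarrow> lvl e < lvl f) \<and>
     (\<forall>e f. (\<Sum>d\<in>{1..Suc D}. muM mu (replicate d \<delta>) e f) = 0)"

text \<open>Differential of the endomorphism complex:
  x |-> sum_d mu^d(delta,...,delta,x,delta,...,delta).  Terms with d > 2D+1 vanish.\<close>
definition endo_diff ::
  "('s::ab_group_add list \<Rightarrow> 's) \<Rightarrow> nat \<Rightarrow> ('b \<Rightarrow> 'b \<Rightarrow> 's) \<Rightarrow> ('b \<Rightarrow> 'b \<Rightarrow> 's) \<Rightarrow> ('b \<Rightarrow> 'b \<Rightarrow> 's)" where
  "endo_diff mu D \<delta> x = (\<lambda>e f. \<Sum>d\<in>{1..2 * D + 1}. \<Sum>p<d.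
        muM mu (replicate p \<delta> @ [x] @ replicate (d - 1 - p) \<delta>) e f)"

definition endo_coh_nonneg ::
  "(int \<Rightarrow> 's::ab_group_add set) \<Rightarrow> ('s list \<Rightarrow> 's) \<Rightarrow> nat \<Rightarrow> 'b set \<Rightarrow> ('b \<Rightarrow> nat) \<Rightarrow> ('b \<Rightarrow> 'b \<Rightarrow> 's) \<Rightarrow> bool" where
  "endo_coh_nonneg Sd mu D E lvl \<delta> \<longleftrightarrow>
     (\<forall>k<0. \<forall>x. endo_elt Sd E lvl k x \<and> endo_diff mu D \<delta> x = (\<lambda>_ _. 0) \<longrightarrow>
        (\<exists>y. endo_elt Sd E lvl (k - 1) y \<and> endo_diff mu D \<delta> y = x))"

end

theory Submission
  imports Defs
begin

text \<open>
  Suppose the basis levels of the twisted complex P are not all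
  equal, and pick a basis vector e0 of minimal level l and a basis vector f0 of maximal
  level m > l.  The elementary matrix carrying the unit u from e0 to f0 is an
  endomorphism of P of degree l - m < 0.  Since delta strictly raises the level, no
  delta can enter e0 or leave f0, so the only term of its differential is mu^1(u) = 0:
  it is a cocycle.  By the cohomology hypothesis it is the differential of some y of
  degree l - m - 1; but every entry of y lies in a degree at most -1 of S, hence y = 0,
  and so the elementary matrix is 0, i.e. u = 0.  A zero cohomological unit forces S = 0.
\<close>

lemma nth_replicate_around:
  "i < p \<Longrightarrow> (replicate p a @ [x] @ replicate q a) ! i = a"
  "(replicate p a @ [x] @ replicate q a) ! p = x"
  "p < i \<Longrightarrow> i < Suc (p + q) \<Longrightarrow> (replicate p a @ [x] @ replicate q a) ! i = a"
  by (auto simp: nth_append)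

lemma mu_zero_arg:
  assumes "ainf_F2 Sd mu" and "i < length xs"
  shows "mu (xs[i := 0]) = 0"
proof -
  have "mu (xs[i := 0 + 0]) = mu (xs[i := 0]) + mu (xs[i := 0])"
    using assms unfolding ainf_F2_def by blast
  then show ?thesis by simp
qed

text \<open>If the cohomological unit is zero, the algebra is zero: x = mu^2(u, x) = mu^2(0, x) = 0.\<close>
lemma zero_unit_trivial:
  fixes Sd :: "int \<Rightarrow> 's::ab_group_add set"
  assumes "ainf_F2 Sd mu" and "c_unit Sd mu 0"
  shows "Sd k = {0}"
proof (intro set_eqI iffI)
  fix x assume x: "x \<in> Sd k"
  have "mu [0, x] = x" using assms(2) x by (simp add: c_unit_def)
  moreover have "mu [0, x] = 0" using mu_zero_arg[OF assms(1), of 0 "[0, x]"] by simp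
  ultimately show "x \<in> {0}" by simp
next
  fix x :: 's assume "x \<in> {0}"
  then show "x \<in> Sd k" using assms(1) by (simp add: ainf_F2_def graded_F2_def)
qed

lemma muM_zero_matrix:
  assumes "i < length Xs" and "Xs ! i = (\<lambda>_ _. 0)"
  shows "muM mu Xs e f = 0"
proof -
  have "mpaths Xs e f = {}"
    using assms by (auto simp: mpaths_def)
  then show ?thesis by (simp add: muM_def)
qed

lemma endo_diff_zero: "endo_diff mu D \<delta> (\<lambda>_ _. 0) = (\<lambda>_ _. 0)"
  unfolding endo_diff_def
  by (intro ext sum.neutral ballI muM_zero_matrix[where i = p for p])
     (auto simp: nth_append)

definition elem_matrix :: "'b \<Rightarrow> 'b \<Rightarrow> 's::zero \<Rightarrow> 'b \<Rightarrow> 'b \<Rightarrow> 's" where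
  "elem_matrix e0 f0 s = (\<lambda>e f. if e = e0 \<and> f = f0 then s else 0)"

lemma elem_matrix_endo_elt:
  assumes "graded_F2 Sd" and "e0 \<in> E" and "f0 \<in> E" and "s \<in> Sd 0"
  shows "endo_elt Sd E lvl (int (lvl e0) - int (lvl f0)) (elem_matrix e0 f0 s)"
proof -
  have "0 \<in> Sd k" for k using assms(1) by (simp add: graded_F2_def)
  moreover have "{f. elem_matrix e0 f0 s e f \<noteq> 0} \<subseteq> {f0}" for e
    by (auto simp: elem_matrix_def split: if_splits)
  ultimately show ?thesis
    using assms(2-4) finite_subset
    by (fastforce simp: endo_elt_def elem_matrix_def)
qed

lemma mpaths_through_elem:
  assumes ps: "ps \<in> mpaths (replicate p \<delta> @ [elem_matrix e0 f0 s] @ replicate q \<delta>) e f"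
    and source: "\<forall>a. \<delta> a e0 = 0" and sink: "\<forall>b. \<delta> f0 b = 0"
  shows "p = 0 \<and> q = 0 \<and> ps ! 0 = e0 \<and> ps ! Suc 0 = f0"
proof -
  let ?Xs = "replicate p \<delta> @ [elem_matrix e0 f0 s] @ replicate q \<delta>"
  have nz: "\<And>i. i < Suc (p + q) \<Longrightarrow> (?Xs ! i) (ps ! i) (ps ! Suc i) \<noteq> 0"
    using ps by (auto simp: mpaths_def)
  have "elem_matrix e0 f0 s (ps ! p) (ps ! Suc p) \<noteq> 0"
    using nz[of p] nth_replicate_around(2)[of p \<delta> "elem_matrix e0 f0 s" q] by simp
  then have at_p: "ps ! p = e0" "ps ! Suc p = f0"
    by (auto simp: elem_matrix_def split: if_splits)
  have "p = 0"
  proof (rule ccontr)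
    assume "p \<noteq> 0"
    then have "\<delta> (ps ! (p - 1)) (ps ! Suc (p - 1)) \<noteq> 0"
      using nz[of "p - 1"] nth_replicate_around(1)[of "p - 1" p \<delta> "elem_matrix e0 f0 s" q] by simp
    then show False using source at_p \<open>p \<noteq> 0\<close> by simp
  qed
  moreover have "q = 0"
  proof (rule ccontr)
    assume "q \<noteq> 0"
    then have "\<delta> (ps ! Suc p) (ps ! Suc (Suc p)) \<noteq> 0"
      using nz[of "Suc p"] nth_replicate_around(3)[of p "Suc p" q \<delta> "elem_matrix e0 f0 s"] by simp
    then show False using sink at_p by simp
  qed
  ultimately show ?thesis using at_p by simp
qed

text \<open>Hence an elementary matrix from a source to a sink is a cocycle once its entry is
  killed by mu^1: the only surviving term of its differential is mu^1(s).\<close>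
lemma elem_matrix_cocycle:
  assumes source: "\<forall>a. \<delta> a e0 = 0" and sink: "\<forall>b. \<delta> f0 b = 0" and "mu [s] = 0"
  shows "endo_diff mu D \<delta> (elem_matrix e0 f0 s) = (\<lambda>_ _. 0)"
  unfolding endo_diff_def
proof (intro ext sum.neutral ballI)
  fix e f d p assume d: "d \<in> {1..2 * D + 1}" and p: "p \<in> {..<d}"
  let ?Xs = "replicate p \<delta> @ [elem_matrix e0 f0 s] @ replicate (d - 1 - p) \<delta>"
  have "mu (map (\<lambda>i. (?Xs ! i) (ps ! i) (ps ! Suc i)) [0..<length ?Xs]) = 0"
    if ps: "ps \<in> mpaths ?Xs e f" for ps
  proof -
    have path: "p = 0 \<and> d - 1 - p = 0 \<and> ps ! 0 = e0 \<and> ps ! Suc 0 = f0"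
      using mpaths_through_elem[OF ps source sink] .
    then have "?Xs = [elem_matrix e0 f0 s]" using p by simp
    then have entries: "map (\<lambda>i. (?Xs ! i) (ps ! i) (ps ! Suc i)) [0..<length ?Xs] = [s]"
      using path by (simp add: elem_matrix_def)
    show ?thesis unfolding entries by (rule \<open>mu [s] = 0\<close>)
  qed
  then show "muM mu ?Xs e f = 0" unfolding muM_def by (intro sum.neutral) blast
qed

text \<open>If S vanishes in negative degrees and all levels lie in [l, m], an endomorphism of
  degree k with k + m - l < 0 is zero, because each of its entries has negative degree.\<close>
lemma endo_elt_too_negative:
  assumes "\<forall>k<0. Sd k = {0}" and "endo_elt Sd E lvl k y"
    and "\<forall>a\<in>E. l \<le> lvl a \<and> lvl a \<le> m" and "k + int m - int l < 0"
  shows "y = (\<lambda>_ _. 0)"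
proof (intro ext)
  fix a b show "y a b = 0"
  proof (rule ccontr)
    assume nz: "y a b \<noteq> 0"
    then have "a \<in> E" "b \<in> E" and entry: "y a b \<in> Sd (k + int (lvl b) - int (lvl a))"
      using assms(2) by (auto simp: endo_elt_def)
    then have "l \<le> lvl a" "lvl b \<le> m" using assms(3) by auto
    then have "k + int (lvl b) - int (lvl a) < 0" using assms(4) by linarith
    then show False using assms(1) entry nz by auto
  qed
qed

lemma extreme_levels:
  fixes lvl :: "'b \<Rightarrow> nat"
  assumes "\<forall>e\<in>E. lvl e \<le> D" and "\<not> (\<exists>i. \<forall>e\<in>E. lvl e = i)"
  obtains e0 f0 where "e0 \<in> E" "f0 \<in> E" "lvl e0 < lvl f0"
    and "\<forall>a\<in>E. lvl e0 \<le> lvl a \<and> lvl a \<le> lvl f0"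
proof -
  have "lvl ` E \<subseteq> {..D}" using assms(1) by auto
  then have fin: "finite (lvl ` E)" by (rule finite_subset) simp
  obtain e1 e2 where e12: "e1 \<in> E" "e2 \<in> E" "lvl e1 \<noteq> lvl e2" using assms(2) by blast
  have "Min (lvl ` E) \<in> lvl ` E" "Max (lvl ` E) \<in> lvl ` E"
    using fin e12 by (auto intro: Min_in Max_in)
  then obtain e0 f0 where e0: "e0 \<in> E" "lvl e0 = Min (lvl ` E)"
    and f0: "f0 \<in> E" "lvl f0 = Max (lvl ` E)"
    by auto
  have extreme: "\<forall>a\<in>E. lvl e0 \<le> lvl a \<and> lvl a \<le> lvl f0"
    using fin e0(2) f0(2) by simp
  then have "lvl e0 \<le> lvl e1" "lvl e1 \<le> lvl f0" "lvl e0 \<le> lvl e2" "lvl e2 \<le> lvl f0"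
    using e12(1,2) by auto
  then have "lvl e0 < lvl f0" using e12(3) by linarith
  then show ?thesis using that e0(1) f0(1) extreme by blast
qed

text \<open>Since delta strictly raises the level, no delta enters a basis vector of minimal
  level and none leaves a basis vector of maximal level.\<close>
lemma extremal_source_sink:
  assumes "twisted_complex Sd mu D E lvl \<delta>"
    and extreme: "\<forall>a\<in>E. lvl e0 \<le> lvl a \<and> lvl a \<le> lvl f0"
  shows "\<delta> a e0 = 0" and "\<delta> f0 b = 0"
proof -
  have raises: "\<And>a b. \<delta> a b \<noteq> 0 \<Longrightarrow> a \<in> E \<and> b \<in> E \<and> lvl a < lvl b"
    using assms(1) by (auto simp: twisted_complex_def endo_elt_def)
  show "\<delta> a e0 = 0"
  proof (rule ccontr)
    assume "\<delta> a e0 \<noteq> 0"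
    then have "a \<in> E" "lvl a < lvl e0" using raises by blast+
    then show False using extreme by fastforce
  qed
  show "\<delta> f0 b = 0"
  proof (rule ccontr)
    assume "\<delta> f0 b \<noteq> 0"
    then have "b \<in> E" "lvl f0 < lvl b" using raises by blast+
    then show False using extreme by fastforce
  qed
qed

theorem lemmaA4:
  fixes Sd :: "int \<Rightarrow> 's::ab_group_add set" and mu :: "'s list \<Rightarrow> 's" and u :: 's
    and D :: nat and E :: "'b set" and lvl :: "'b \<Rightarrow> nat" and \<delta> :: "'b \<Rightarrow> 'b \<Rightarrow> 's"
  assumes "minimal_ainf Sd mu"
    and "c_unit Sd mu u"
    and "\<forall>k<0. Sd k = {0}"
    and "twisted_complex Sd mu D E lvl \<delta>"
    and "endo_coh_nonneg Sd mu D E lvl \<delta>"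
  shows "(\<exists>i. \<forall>e\<in>E. lvl e = i) \<or> (\<forall>k. Sd k = {0})"
proof (cases "\<exists>i. \<forall>e\<in>E. lvl e = i")
  case True
  then show ?thesis ..
next
  case nonconst: False
  have ainf: "ainf_F2 Sd mu" and u: "u \<in> Sd 0" "mu [u] = 0"
    using assms(1,2) by (auto simp: minimal_ainf_def c_unit_def)
  then have graded: "graded_F2 Sd" by (simp add: ainf_F2_def)
  have bounded: "\<forall>e\<in>E. lvl e \<le> D"
    using assms(4) by (simp add: twisted_complex_def)
  obtain e0 f0 where e0f0: "e0 \<in> E" "f0 \<in> E" "lvl e0 < lvl f0"
    and extreme: "\<forall>a\<in>E. lvl e0 \<le> lvl a \<and> lvl a \<le> lvl f0"
    using extreme_levels[OF bounded nonconst] by blast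
  have source: "\<forall>a. \<delta> a e0 = 0" and sink: "\<forall>b. \<delta> f0 b = 0"
    using extremal_source_sink[OF assms(4) extreme] by blast+
  define k where "k = int (lvl e0) - int (lvl f0)"
  let ?x = "elem_matrix e0 f0 u"
  have "endo_elt Sd E lvl k ?x"
    unfolding k_def using graded e0f0(1,2) u(1) by (rule elem_matrix_endo_elt)
  moreover have "endo_diff mu D \<delta> ?x = (\<lambda>_ _. 0)"
    by (intro elem_matrix_cocycle source sink u(2))
  moreover have "k < 0" using e0f0(3) by (simp add: k_def)
  ultimately obtain y where y: "endo_elt Sd E lvl (k - 1) y" "endo_diff mu D \<delta> y = ?x"
    using assms(5) unfolding endo_coh_nonneg_def by blast
  have "y = (\<lambda>_ _. 0)"
    using endo_elt_too_negative[OF assms(3) y(1) extreme] by (simp add: k_def)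
  then have "?x = endo_diff mu D \<delta> (\<lambda>_ _. 0)" using y(2) by simp
  also have "\<dots> = (\<lambda>_ _. 0)" by (rule endo_diff_zero)
  finally have "?x = (\<lambda>_ _. 0)" .
  then have "u = 0" unfolding elem_matrix_def by meson
  then have "c_unit Sd mu 0" using assms(2) by simp
  then show ?thesis using zero_unit_trivial[OF ainf] by simp
qed

end
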